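(* Let $h$ be a complex-valued $\mathcal P\times\mathcal B(\mathbb R^d)$-measurable function on $\mathcal O_\tau\times\mathbb R^d$ such that $\int_0^\tau\|h(t,\cdot)\|^2_{L_2(\mathbb R^d)}dt<\infty$ almost surely. Then for every $\varphi\in\mathcal F^{-1}\mathcal D(\mathbb R^d)$ and every $T\in(0,\infty)$, $\int_0^T1_{\mathcal O_\tau}(t)\sum_{k=1}^\infty|\langle h(t,\cdot)\eta_k,\varphi\rangle|^2dt<\infty$ almost surely; consequently the stochastic integral $\int_0^t1_{\mathcal O_\tau}(s)\langle h(s,\cdot)\eta_k,\varphi\rangle dB^k_s$ is well-defined.
   Context: $(\Omega,\mathscr F,P)$ is a complete probability space with a filtration $(\mathscr F_t)_{t\ge0}$ of sub-$\sigma$-fields each containing all $P$-null sets; $\mathcal P$ is the predictable $\sigma$-algebra on $\Omega\times[0,\infty)$; $B^1_t,B^2_t,\dots$ are independent one-dimensional Wiener processes relative to $(\mathscr F_t)$; repeated $k$ is summed over $\mathbb N$. $\tau$ is a finite stopping time and $\mathcal O_\tau=\{(\omega,t):0<t\le\tau(\omega)\}$. $\{\eta_k\}_{k\in\mathbb N}$ is an orthonormal basis of $L_2(\mathbb R^d)$ with every $\eta_k\in\mathcal S(\mathbb R^d)$. $\mathcal F[f](\xi)=(2\pi)^{-d/2}\int e^{-i\xi\cdot x}f(x)dx$ (extended to $L_2$ by Plancherel), $\mathcal F^{-1}\mathcal D(\mathbb R^d):=\{\varphi\in\mathcal S(\mathbb R^d):\mathcal F[\varphi]\in C_c^\infty(\mathbb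 R^d)\}$, and for $\varphi\in\mathcal F^{-1}\mathcal D$, $\langle h(t,\cdot)\eta_k,\varphi\rangle:=\int_{\mathbb R^d}\mathcal F[h(t,\cdot)\eta_k](\xi)\overline{\mathcal F[\varphi](\xi)}d\xi$. *)

theory Defs
  imports "HOL-Analysis.Analysis" "HOL-Probability.Probability"
begin

fun dderivs :: "'a::euclidean_space list \<Rightarrow> ('a \<Rightarrow> 'b::real_normed_vector) \<Rightarrow> 'a \<Rightarrow> 'b" where
  "dderivs [] f = f"
| "dderivs (v # vs) f = (\<lambda>x. frechet_derivative (dderivs vs f) (at x) v)"

definition smooth_fun :: "('a::euclidean_space \<Rightarrow> 'b::real_normed_vector) \<Rightarrow> bool" where
  "smooth_fun f \<longleftrightarrow> (\<forall>vs. set vs \<subseteq> Basis \<longrightarrow> (\<forall>x. dderivs vs f differentiable at x))"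

definition schwartz :: "('a::euclidean_space \<Rightarrow> complex) \<Rightarrow> bool" where
  "schwartz f \<longleftrightarrow> smooth_fun f \<and>
     (\<forall>vs k. set vs \<subseteq> Basis \<longrightarrow>
        (\<exists>C. \<forall>x. (1 + norm x) ^ k * norm (dderivs vs f x) \<le> C))"

definition fourier :: "('a::euclidean_space \<Rightarrow> complex) \<Rightarrow> 'a \<Rightarrow> complex" where
  "fourier f \<xi> = complex_of_real ((2 * pi) powr (- real DIM('a) / 2)) *
      (\<integral>x. exp (- \<i> * complex_of_real (\<xi> \<bullet> x)) * f x \<partial>lborel)"

definition inv_fourier_D :: "('a::euclidean_space \<Rightarrow> complex) set" where
  "inv_fourier_D = {\<phi>. schwartz \<phi> \<and> smooth_fun (fourier \<phi>)
                        \<and> compact (closure {\<xi>. fourier \<phi> \<xi> \<noteq> 0})}"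

definition fpair :: "('a::euclidean_space \<Rightarrow> complex) \<Rightarrow> ('a \<Rightarrow> complex) \<Rightarrow> complex" where
  "fpair g \<phi> = (\<integral>\<xi>. fourier g \<xi> * cnj (fourier \<phi> \<xi>) \<partial>lborel)"

definition L2 :: "('a::euclidean_space \<Rightarrow> complex) set" where
  "L2 = {f. f \<in> borel_measurable lborel \<and> integrable lborel (\<lambda>x. (cmod (f x))\<^sup>2)}"

definition L2_inner :: "('a::euclidean_space \<Rightarrow> complex) \<Rightarrow> ('a \<Rightarrow> complex) \<Rightarrow> complex" where
  "L2_inner f g = (\<integral>x. f x * cnj (g x) \<partial>lborel)"

definition L2_onb :: "(nat \<Rightarrow> 'a::euclidean_space \<Rightarrow> complex) \<Rightarrow> bool" where
  "L2_onb e \<longleftrightarrow> (\<forall>k. e k \<in> L2) \<and>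
     (\<forall>j k. L2_inner (e j) (e k) = (if j = k then 1 else 0)) \<and>
     (\<forall>f \<in> L2. (\<forall>k. L2_inner f (e k) = 0) \<longrightarrow> (AE x in lborel. f x = 0))"

definition predictable :: "'w measure \<Rightarrow> (real \<Rightarrow> 'w measure) \<Rightarrow> ('w \<times> real) measure" where
  "predictable M F = sigma (space M \<times> {0..})
     ({A \<times> {0} | A. A \<in> sets (F 0)} \<union>
      {A \<times> {s<..t} | A s t. 0 \<le> s \<and> s < t \<and> A \<in> sets (F s)})"

definition usual_filtration :: "'w measure \<Rightarrow> (real \<Rightarrow> 'w measure) \<Rightarrow> bool" where
  "usual_filtration M F \<longleftrightarrow> filtration (space M) F \<and>
     (\<forall>t. sets (F t) \<subseteq> sets M) \<and> (\<forall>t\<ge>0. null_sets M \<subseteq> sets (F t))"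

definition stoch_interval :: "('w \<Rightarrow> real) \<Rightarrow> ('w \<times> real) set" where
  "stoch_interval \<tau> = {(\<omega>, t). 0 < t \<and> t \<le> \<tau> \<omega>}"

end

theory Submission
  imports Defs
begin

(* For \<phi> in F^{-1}D the pairing is an ordinary integral against a bounded function: by the
   multiplication formula for the Fourier transform, <g, \<phi>> = \<integral> g \<Psi> with \<Psi> the Fourier
   transform of conj (F \<phi>), and |\<Psi>| is bounded by (2 pi)^(-d/2) times the L1 norm of F \<phi>, which
   is finite because F \<phi> is continuous with compact support. Hence <h(t) \<eta>_k, \<phi>> is the k-th
   coefficient of h(t) \<Psi> with respect to the orthonormal family conj \<eta>_k, and Bessel's inequality
   gives \<Sum>_k |<h(t) \<eta>_k, \<phi>>|^2 \<le> C ||h(t)||^2 for every t. Integrating over (0, \<tau>] gives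
   the claim. Only orthonormality of the \<eta>_k and measurability of the sections h(\<omega>, t, .)
   are used. *)

lemma borel_measurable_cnj [measurable (raw)]:
  fixes f :: "'a \<Rightarrow> complex"
  assumes "f \<in> borel_measurable M"
  shows "(\<lambda>x. cnj (f x)) \<in> borel_measurable M"
  by (intro borel_measurable_continuous_on[OF _ assms] continuous_intros)

text \<open>Unlike nn_integral_cmult this needs no measurability of f: the integrand in t of the main
  theorem is not known to be measurable.\<close>

lemma nn_integral_cmult_le:
  fixes c :: ennreal
  assumes "c < \<infinity>"
  shows "(\<integral>\<^sup>+x. c * f x \<partial>M) \<le> c * integral\<^sup>N M f"
proof (cases "c = 0")
  case True
  then show ?thesis by simp
next
  case False
  have inverse_c: "inverse c * c = 1"
    using False assms ennreal_divide_self[of c] by (simp add: divide_ennreal_def mult.commute)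
  have "integral\<^sup>S M g \<le> c * integral\<^sup>N M f"
    if g: "simple_function M g" "g \<le> (\<lambda>x. c * f x)" for g
  proof -
    let ?g = "\<lambda>x. inverse c * g x"
    have simple: "simple_function M ?g"
      using simple_function_compose1[OF g(1), of "\<lambda>y. inverse c * y"] by simp
    have "?g x \<le> inverse c * (c * f x)" for x
      using g(2) by (auto simp: le_fun_def intro: mult_left_mono)
    then have "?g \<le> f"
      by (simp add: le_fun_def mult.assoc[symmetric] inverse_c)
    then have "integral\<^sup>S M ?g \<le> integral\<^sup>N M f"
      unfolding nn_integral_def using simple by (intro SUP_upper) auto
    moreover have "(\<lambda>x. c * ?g x) = g"
      by (simp add: mult.assoc[symmetric] mult.commute[of c] inverse_c)
    then have "integral\<^sup>S M g = c * integral\<^sup>S M ?g"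
      using simple_integral_mult[OF simple, of c] by simp
    ultimately show ?thesis
      by (simp add: mult_left_mono)
  qed
  then show ?thesis
    unfolding nn_integral_def[of _ "\<lambda>x. c * f x"] by (intro SUP_least) auto
qed

lemma measurable_Pair_restrict_space:
  assumes f: "f \<in> borel_measurable (restrict_space (M \<Otimes>\<^sub>M N) (A \<times> B))"
    and "a \<in> space M" "a \<in> A" "space N \<subseteq> B"
  shows "(\<lambda>y. f (a, y)) \<in> borel_measurable N"
proof -
  have "Pair a \<in> measurable N (restrict_space (M \<Otimes>\<^sub>M N) (A \<times> B))"
    using assms measurable_Pair1'[of a M N] by (intro measurable_restrict_space2) auto
  from measurable_compose[OF this f] show ?thesis .
qed

lemma borel_measurable_section_stoch_interval:
  assumes "(\<lambda>((\<omega>, t), x). h \<omega> t x) \<in> borel_measurable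
      (restrict_space (predictable M F \<Otimes>\<^sub>M borel) (stoch_interval \<tau> \<times> UNIV))"
    and "\<omega> \<in> space M" "(\<omega>, t) \<in> stoch_interval \<tau>"
  shows "h \<omega> t \<in> borel_measurable lborel"
  using measurable_Pair_restrict_space[OF assms(1), of "(\<omega>, t)"] assms(2,3)
  by (auto simp: predictable_def space_measure_of_conv stoch_interval_def)

definition L2_orthonormal :: "(nat \<Rightarrow> 'a::euclidean_space \<Rightarrow> complex) \<Rightarrow> bool" where
  "L2_orthonormal e \<longleftrightarrow>
     (\<forall>k. e k \<in> L2) \<and> (\<forall>j k. L2_inner (e j) (e k) = (if j = k then 1 else 0))"

lemma L2_onb_imp_orthonormal: "L2_onb e \<Longrightarrow> L2_orthonormal e"
  by (simp add: L2_onb_def L2_orthonormal_def)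

lemma L2_imp_borel_measurable [measurable_dest]: "f \<in> L2 \<Longrightarrow> f \<in> borel_measurable lborel"
  by (simp add: L2_def)

lemma L2_integrable_mult_cnj:
  assumes "f \<in> L2" "g \<in> L2"
  shows "integrable lborel (\<lambda>x. f x * cnj (g x))"
proof (rule Bochner_Integration.integrable_bound)
  show "integrable lborel (\<lambda>x. (cmod (f x))\<^sup>2 + (cmod (g x))\<^sup>2)"
    using assms by (auto simp: L2_def)
  show "(\<lambda>x. f x * cnj (g x)) \<in> borel_measurable lborel"
    using assms by measurable
  have "cmod (f x) * cmod (g x) \<le> (cmod (f x))\<^sup>2 + (cmod (g x))\<^sup>2" for x
  proof -
    have "2 * cmod (f x) * cmod (g x) \<le> (cmod (f x))\<^sup>2 + (cmod (g x))\<^sup>2"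
      by (rule sum_squares_bound)
    moreover have "0 \<le> cmod (f x) * cmod (g x)"
      by simp
    ultimately show ?thesis
      by linarith
  qed
  then show "AE x in lborel. norm (f x * cnj (g x)) \<le> norm ((cmod (f x))\<^sup>2 + (cmod (g x))\<^sup>2)"
    by (simp add: norm_mult)
qed

lemma L2_add: "f \<in> L2 \<Longrightarrow> g \<in> L2 \<Longrightarrow> (\<lambda>x. f x + g x) \<in> L2"
  unfolding L2_def
proof safe
  assume f: "f \<in> borel_measurable lborel" "integrable lborel (\<lambda>x. (cmod (f x))\<^sup>2)"
    and g: "g \<in> borel_measurable lborel" "integrable lborel (\<lambda>x. (cmod (g x))\<^sup>2)"
  show "(\<lambda>x. f x + g x) \<in> borel_measurable lborel"
    using f g by measurable
  show "integrable lborel (\<lambda>x. (cmod (f x + g x))\<^sup>2)"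
  proof (rule Bochner_Integration.integrable_bound)
    show "integrable lborel (\<lambda>x. 2 * (cmod (f x))\<^sup>2 + 2 * (cmod (g x))\<^sup>2)"
      using f g by simp
    show "(\<lambda>x. (cmod (f x + g x))\<^sup>2) \<in> borel_measurable lborel"
      using f g by measurable
    have "(cmod (f x + g x))\<^sup>2 \<le> 2 * (cmod (f x))\<^sup>2 + 2 * (cmod (g x))\<^sup>2" for x
    proof -
      have "(cmod (f x + g x))\<^sup>2 \<le> (cmod (f x) + cmod (g x))\<^sup>2"
        by (intro power_mono norm_triangle_ineq) simp
      also have "\<dots> \<le> 2 * (cmod (f x))\<^sup>2 + 2 * (cmod (g x))\<^sup>2"
        using sum_squares_bound[of "cmod (f x)" "cmod (g x)"]
        by (simp add: power2_eq_square algebra_simps)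
      finally show ?thesis .
    qed
    then show "AE x in lborel. norm ((cmod (f x + g x))\<^sup>2) \<le> norm (2 * (cmod (f x))\<^sup>2 + 2 * (cmod (g x))\<^sup>2)"
      by simp
  qed
qed

lemma L2_mult_left: "f \<in> L2 \<Longrightarrow> (\<lambda>x. c * f x) \<in> L2"
  by (auto simp: L2_def norm_mult power_mult_distrib)

lemma L2_diff: "f \<in> L2 \<Longrightarrow> g \<in> L2 \<Longrightarrow> (\<lambda>x. f x - g x) \<in> L2"
  using L2_add[of f "\<lambda>x. (-1) * g x"] L2_mult_left[of g "-1"] by simp

lemma L2_cnj: "f \<in> L2 \<Longrightarrow> (\<lambda>x. cnj (f x)) \<in> L2"
  by (auto simp: L2_def)

lemma L2_sum: "(\<And>k. e k \<in> L2) \<Longrightarrow> (\<lambda>x. \<Sum>k\<in>A. a k * e k x) \<in> L2"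
proof (induction A rule: infinite_finite_induct)
  case (insert k A)
  then have "(\<lambda>x. a k * e k x + (\<Sum>k\<in>A. a k * e k x)) \<in> L2"
    by (intro L2_add L2_mult_left) auto
  with insert show ?case by simp
qed (auto simp: L2_def)

lemma L2_inner_diff_left:
  "f \<in> L2 \<Longrightarrow> g \<in> L2 \<Longrightarrow> h \<in> L2 \<Longrightarrow>
   L2_inner (\<lambda>x. f x - g x) h = L2_inner f h - L2_inner g h"
  unfolding L2_inner_def by (simp add: left_diff_distrib L2_integrable_mult_cnj)

lemma L2_inner_diff_right:
  "f \<in> L2 \<Longrightarrow> g \<in> L2 \<Longrightarrow> h \<in> L2 \<Longrightarrow>
   L2_inner h (\<lambda>x. f x - g x) = L2_inner h f - L2_inner h g"
  unfolding L2_inner_def by (simp add: right_diff_distrib L2_integrable_mult_cnj)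

lemma L2_inner_sum_left:
  "(\<And>k. e k \<in> L2) \<Longrightarrow> g \<in> L2 \<Longrightarrow>
   L2_inner (\<lambda>x. \<Sum>k\<in>A. a k * e k x) g = (\<Sum>k\<in>A. a k * L2_inner (e k) g)"
  unfolding L2_inner_def
  by (simp add: sum_distrib_right mult.assoc integral_sum L2_integrable_mult_cnj)

lemma L2_inner_commute: "L2_inner g f = cnj (L2_inner f g)"
  unfolding L2_inner_def by (simp add: Bochner_Integration.integral_cnj[symmetric] mult.commute)

lemma L2_inner_sum_right:
  "(\<And>k. e k \<in> L2) \<Longrightarrow> g \<in> L2 \<Longrightarrow>
   L2_inner g (\<lambda>x. \<Sum>k\<in>A. a k * e k x) = (\<Sum>k\<in>A. cnj (a k) * L2_inner g (e k))"
  by (subst (1 2) L2_inner_commute) (simp add: L2_inner_sum_left)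

lemma L2_inner_self: "L2_inner f f = complex_of_real (\<integral>x. (cmod (f x))\<^sup>2 \<partial>lborel)"
  unfolding L2_inner_def by (simp only: complex_norm_square[symmetric] integral_complex_of_real)

lemma L2_inner_cnj: "L2_inner (\<lambda>x. cnj (f x)) (\<lambda>x. cnj (g x)) = cnj (L2_inner f g)"
  unfolding L2_inner_def by (simp add: Bochner_Integration.integral_cnj[symmetric])

lemma L2_orthonormal_cnj: "L2_orthonormal e \<Longrightarrow> L2_orthonormal (\<lambda>k x. cnj (e k x))"
  by (simp add: L2_orthonormal_def L2_cnj L2_inner_cnj)

lemma L2_mult_bounded:
  assumes u: "u \<in> L2" and [measurable]: "\<Psi> \<in> borel_measurable lborel"
    and \<Psi>_le: "\<And>x. cmod (\<Psi> x) \<le> B"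
  shows "(\<lambda>x. u x * \<Psi> x) \<in> L2"
    and "(\<integral>x. (cmod (u x * \<Psi> x))\<^sup>2 \<partial>lborel) \<le> B\<^sup>2 * (\<integral>x. (cmod (u x))\<^sup>2 \<partial>lborel)"
proof -
  have u_sq: "integrable lborel (\<lambda>x. B\<^sup>2 * (cmod (u x))\<^sup>2)"
    using u by (simp add: L2_def)
  have le: "(cmod (u x * \<Psi> x))\<^sup>2 \<le> B\<^sup>2 * (cmod (u x))\<^sup>2" for x
  proof -
    have "(cmod (\<Psi> x))\<^sup>2 \<le> B\<^sup>2"
      using \<Psi>_le[of x] by (intro power_mono) auto
    then show ?thesis
      by (simp add: norm_mult power_mult_distrib mult_right_mono mult.commute)
  qed
  have [measurable]: "u \<in> borel_measurable lborel"
    using u by (simp add: L2_def)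
  have u\<Psi>_sq: "integrable lborel (\<lambda>x. (cmod (u x * \<Psi> x))\<^sup>2)"
    by (rule Bochner_Integration.integrable_bound[OF u_sq]) (simp_all add: le)
  with u show "(\<lambda>x. u x * \<Psi> x) \<in> L2"
    by (simp add: L2_def)
  show "(\<integral>x. (cmod (u x * \<Psi> x))\<^sup>2 \<partial>lborel) \<le> B\<^sup>2 * (\<integral>x. (cmod (u x))\<^sup>2 \<partial>lborel)"
    using integral_mono[OF u\<Psi>_sq u_sq le] by simp
qed

lemma bessel_inequality_finite:
  assumes H: "H \<in> L2" and e: "L2_orthonormal e"
  shows "(\<Sum>k<n. (cmod (L2_inner H (e k)))\<^sup>2) \<le> (\<integral>x. (cmod (H x))\<^sup>2 \<partial>lborel)"
proof -
  define c where "c k = L2_inner H (e k)" for k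
  define S where "S x = (\<Sum>k<n. c k * e k x)" for x
  define \<Sigma> where "\<Sigma> = (\<Sum>k<n. (cmod (c k))\<^sup>2)"
  have eL2: "e k \<in> L2" and orth: "L2_inner (e j) (e k) = (if j = k then 1 else 0)" for j k
    using e by (auto simp: L2_orthonormal_def)
  have S: "S \<in> L2"
    unfolding S_def by (rule L2_sum[OF eL2])
  have c_cnj: "c k * cnj (c k) = complex_of_real ((cmod (c k))\<^sup>2)" for k
    by (simp only: complex_norm_square)
  have HS: "L2_inner H S = of_real \<Sigma>"
    unfolding S_def \<Sigma>_def using H eL2
    by (subst L2_inner_sum_right) (auto simp: c_def[symmetric] mult.commute[of "cnj _"] c_cnj)
  have SH: "L2_inner S H = of_real \<Sigma>"
    using HS by (subst L2_inner_commute) simp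
  have "L2_inner S S = (\<Sum>j<n. c j * (\<Sum>k<n. cnj (c k) * L2_inner (e j) (e k)))"
    unfolding S_def[abs_def] using eL2 by (simp add: L2_inner_sum_left L2_inner_sum_right L2_sum)
  also have "\<dots> = of_real \<Sigma>"
    by (simp add: orth if_distrib c_cnj \<Sigma>_def cong: if_cong)
  finally have SS: "L2_inner S S = of_real \<Sigma>" .
  have "complex_of_real (\<integral>x. (cmod (H x - S x))\<^sup>2 \<partial>lborel)
      = L2_inner H H - L2_inner H S - (L2_inner S H - L2_inner S S)"
    using H S L2_diff[OF H S] by (simp add: L2_inner_self[symmetric] L2_inner_diff_left L2_inner_diff_right)
  also have "\<dots> = of_real ((\<integral>x. (cmod (H x))\<^sup>2 \<partial>lborel) - \<Sigma>)"
    by (simp only: HS SH SS L2_inner_self[of H]) simp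
  finally have "(\<integral>x. (cmod (H x))\<^sup>2 \<partial>lborel) - \<Sigma> = (\<integral>x. (cmod (H x - S x))\<^sup>2 \<partial>lborel)"
    by (simp only: of_real_eq_iff)
  moreover have "0 \<le> (\<integral>x. (cmod (H x - S x))\<^sup>2 \<partial>lborel)"
    by simp
  ultimately have "\<Sigma> \<le> (\<integral>x. (cmod (H x))\<^sup>2 \<partial>lborel)"
    by linarith
  then show ?thesis
    by (simp add: \<Sigma>_def c_def)
qed

lemma bessel_inequality:
  assumes "H \<in> L2" "L2_orthonormal e"
  shows "(\<Sum>k. ennreal ((cmod (L2_inner H (e k)))\<^sup>2)) \<le> ennreal (\<integral>x. (cmod (H x))\<^sup>2 \<partial>lborel)"
  unfolding suminf_eq_SUP
proof (rule SUP_least)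
  fix n
  show "(\<Sum>k<n. ennreal ((cmod (L2_inner H (e k)))\<^sup>2)) \<le> ennreal (\<integral>x. (cmod (H x))\<^sup>2 \<partial>lborel)"
    using bessel_inequality_finite[OF assms, of n] by (simp add: ennreal_leI)
qed

lemma borel_measurable_fourier:
  fixes g :: "'a::euclidean_space \<Rightarrow> complex"
  assumes [measurable]: "g \<in> borel_measurable lborel"
  shows "fourier g \<in> borel_measurable lborel"
proof -
  have "(\<lambda>(\<xi>, x). exp (- \<i> * complex_of_real (\<xi> \<bullet> x)) * g x) \<in> borel_measurable (lborel \<Otimes>\<^sub>M lborel)"
    by measurable
  from lborel.borel_measurable_lebesgue_integral[OF this] show ?thesis
    unfolding fourier_def[abs_def] by simp
qed

lemma norm_fourier_le:
  fixes g :: "'a::euclidean_space \<Rightarrow> complex"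
  shows "cmod (fourier g \<xi>) \<le> (2 * pi) powr (- real DIM('a) / 2) * (\<integral>x. cmod (g x) \<partial>lborel)"
proof -
  have "cmod (\<integral>x. exp (- \<i> * complex_of_real (\<xi> \<bullet> x)) * g x \<partial>lborel)
      \<le> (\<integral>x. cmod (exp (- \<i> * complex_of_real (\<xi> \<bullet> x)) * g x) \<partial>lborel)"
    by (rule integral_norm_bound)
  also have "\<dots> = (\<integral>x. cmod (g x) \<partial>lborel)"
    by (simp add: norm_mult)
  finally show ?thesis
    by (simp add: fourier_def norm_mult mult_left_mono)
qed

lemma fourier_multiplication:
  fixes f g :: "'a::euclidean_space \<Rightarrow> complex"
  assumes f: "integrable lborel f" and g: "integrable lborel g"
  shows "(\<integral>\<xi>. fourier f \<xi> * g \<xi> \<partial>lborel) = (\<integral>x. f x * fourier g x \<partial>lborel)"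
proof -
  define c where "c = complex_of_real ((2 * pi) powr (- real DIM('a) / 2))"
  define k where "k \<xi> x = c * exp (- \<i> * complex_of_real (\<xi> \<bullet> x)) * f x * g \<xi>" for \<xi> x
  have [measurable]: "f \<in> borel_measurable lborel" "g \<in> borel_measurable lborel"
    using f g by auto
  have k_measurable [measurable]: "case_prod k \<in> borel_measurable (lborel \<Otimes>\<^sub>M lborel)"
    unfolding k_def by measurable
  have norm_k: "norm (k \<xi> x) = cmod c * cmod (f x) * cmod (g \<xi>)" for \<xi> x
    by (simp add: k_def norm_mult)
  have "integrable (lborel \<Otimes>\<^sub>M lborel) (case_prod k)"
  proof (rule lborel_pair.Fubini_integrable)
    show "integrable lborel (\<lambda>\<xi>. \<integral>x. norm (case_prod k (\<xi>, x)) \<partial>lborel)"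
      using g by (simp add: norm_k)
    have "integrable lborel (\<lambda>x. exp (- \<i> * complex_of_real (\<xi> \<bullet> x)) * f x)" for \<xi>
      by (rule Bochner_Integration.integrable_bound[OF integrable_norm[OF f]]) (auto simp: norm_mult)
    from integrable_mult_right[OF this, of "c * g _"]
    show "AE \<xi> in lborel. integrable lborel (\<lambda>x. case_prod k (\<xi>, x))"
      by (simp add: k_def ac_simps)
  qed (rule k_measurable)
  then have "(\<integral>x. (\<integral>\<xi>. k \<xi> x \<partial>lborel) \<partial>lborel) = (\<integral>\<xi>. (\<integral>x. k \<xi> x \<partial>lborel) \<partial>lborel)"
    by (rule lborel_pair.Fubini_integral)
  moreover have "(\<integral>x. k \<xi> x \<partial>lborel) = fourier f \<xi> * g \<xi>" for \<xi>
  proof -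
    have k_eq: "(\<lambda>x. k \<xi> x) = (\<lambda>x. (c * g \<xi>) * (exp (- \<i> * complex_of_real (\<xi> \<bullet> x)) * f x))"
      by (simp add: k_def fun_eq_iff ac_simps)
    show ?thesis
      unfolding k_eq integral_mult_right_zero fourier_def c_def[symmetric] by (simp only: ac_simps)
  qed
  moreover have "(\<integral>\<xi>. k \<xi> x \<partial>lborel) = f x * fourier g x" for x
  proof -
    have k_eq: "(\<lambda>\<xi>. k \<xi> x) = (\<lambda>\<xi>. (c * f x) * (exp (- \<i> * complex_of_real (x \<bullet> \<xi>)) * g \<xi>))"
      by (simp add: k_def fun_eq_iff inner_commute ac_simps)
    show ?thesis
      unfolding k_eq integral_mult_right_zero fourier_def c_def[symmetric] by (simp only: ac_simps)
  qed
  ultimately show ?thesis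
    by simp
qed

lemma smooth_fun_imp_continuous: "smooth_fun f \<Longrightarrow> continuous_on UNIV f"
  unfolding smooth_fun_def
  by (metis continuous_at_imp_continuous_on differentiable_imp_continuous_within dderivs.simps(1)
      empty_subsetI list.set(1))

lemma integrable_fourier_inv_fourier_D:
  assumes "\<phi> \<in> inv_fourier_D"
  shows "integrable lborel (fourier \<phi>)"
proof -
  let ?K = "closure {\<xi>. fourier \<phi> \<xi> \<noteq> 0}"
  have "continuous_on UNIV (fourier \<phi>)" "compact ?K"
    using assms smooth_fun_imp_continuous by (auto simp: inv_fourier_D_def)
  then have "integrable lborel (\<lambda>\<xi>. indicator ?K \<xi> *\<^sub>R fourier \<phi> \<xi>)"
    by (intro borel_integrable_compact) (auto intro: continuous_on_subset)
  moreover have "(\<lambda>\<xi>. indicator ?K \<xi> *\<^sub>R fourier \<phi> \<xi>) = fourier \<phi>"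
    using closure_subset[of "{\<xi>. fourier \<phi> \<xi> \<noteq> 0}"] by (force simp: indicator_def)
  ultimately show ?thesis
    by simp
qed

lemma fpair_eq_integral_fourier:
  assumes "\<phi> \<in> inv_fourier_D" "integrable lborel g"
  shows "fpair g \<phi> = (\<integral>x. g x * fourier (\<lambda>\<xi>. cnj (fourier \<phi> \<xi>)) x \<partial>lborel)"
  unfolding fpair_def
  using assms integrable_fourier_inv_fourier_D by (intro fourier_multiplication) auto

lemma suminf_fpair_mult_le:
  fixes \<phi> u :: "'a::euclidean_space \<Rightarrow> complex"
  assumes \<phi>: "\<phi> \<in> inv_fourier_D" and \<eta>: "L2_orthonormal \<eta>" and u: "u \<in> L2"
  defines "B \<equiv> (2 * pi) powr (- real DIM('a) / 2) * (\<integral>\<xi>. cmod (fourier \<phi> \<xi>) \<partial>lborel)"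
  shows "(\<Sum>k. ennreal ((cmod (fpair (\<lambda>x. u x * \<eta> k x) \<phi>))\<^sup>2))
    \<le> ennreal (B\<^sup>2 * (\<integral>x. (cmod (u x))\<^sup>2 \<partial>lborel))"
proof -
  define \<Psi> where "\<Psi> = fourier (\<lambda>\<xi>. cnj (fourier \<phi> \<xi>))"
  define e where "e k x = cnj (\<eta> k x)" for k x
  have e: "L2_orthonormal e"
    unfolding e_def using \<eta> by (rule L2_orthonormal_cnj)
  have "\<Psi> \<in> borel_measurable lborel"
    unfolding \<Psi>_def using integrable_fourier_inv_fourier_D[OF \<phi>]
    by (intro borel_measurable_fourier borel_measurable_cnj borel_measurable_integrable)
  moreover have \<Psi>_le: "cmod (\<Psi> x) \<le> B" for x
    using norm_fourier_le[of "\<lambda>\<xi>. cnj (fourier \<phi> \<xi>)"] by (simp add: \<Psi>_def B_def)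
  ultimately have u\<Psi>: "(\<lambda>x. u x * \<Psi> x) \<in> L2"
    and u\<Psi>_le: "(\<integral>x. (cmod (u x * \<Psi> x))\<^sup>2 \<partial>lborel) \<le> B\<^sup>2 * (\<integral>x. (cmod (u x))\<^sup>2 \<partial>lborel)"
    using L2_mult_bounded[OF u] by blast+
  have "fpair (\<lambda>x. u x * \<eta> k x) \<phi> = L2_inner (\<lambda>x. u x * \<Psi> x) (e k)" for k
  proof -
    have "integrable lborel (\<lambda>x. u x * \<eta> k x)"
      using L2_integrable_mult_cnj[OF u, of "e k"] e by (simp add: L2_orthonormal_def e_def)
    then show ?thesis
      using \<phi> by (simp add: fpair_eq_integral_fourier L2_inner_def \<Psi>_def e_def ac_simps)
  qed
  then have "(\<Sum>k. ennreal ((cmod (fpair (\<lambda>x. u x * \<eta> k x) \<phi>))\<^sup>2))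
      \<le> ennreal (\<integral>x. (cmod (u x * \<Psi> x))\<^sup>2 \<partial>lborel)"
    using bessel_inequality[OF u\<Psi> e] by simp
  also have "\<dots> \<le> ennreal (B\<^sup>2 * (\<integral>x. (cmod (u x))\<^sup>2 \<partial>lborel))"
    using u\<Psi>_le by (rule ennreal_leI)
  finally show ?thesis .
qed

lemma suminf_fpair_mult_le_nn_integral:
  fixes \<phi> :: "'a::euclidean_space \<Rightarrow> complex"
  assumes \<phi>: "\<phi> \<in> inv_fourier_D" and \<eta>: "L2_orthonormal \<eta>"
  obtains C :: ennreal where "C < \<infinity>"
    and "\<And>u. u \<in> borel_measurable lborel \<Longrightarrow>
           (\<Sum>k. ennreal ((cmod (fpair (\<lambda>x. u x * \<eta> k x) \<phi>))\<^sup>2))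
             \<le> C * (\<integral>\<^sup>+x. ennreal ((cmod (u x))\<^sup>2) \<partial>lborel)"
proof -
  define B where "B = (2 * pi) powr (- real DIM('a) / 2) * (\<integral>\<xi>. cmod (fourier \<phi> \<xi>) \<partial>lborel)"
  \<comment> \<open>The summand 1 keeps C positive, since in ennreal 0 * \<infinity> = 0.\<close>
  define C where "C = ennreal (B\<^sup>2) + 1"
  have "(\<Sum>k. ennreal ((cmod (fpair (\<lambda>x. u x * \<eta> k x) \<phi>))\<^sup>2))
      \<le> C * (\<integral>\<^sup>+x. ennreal ((cmod (u x))\<^sup>2) \<partial>lborel)"
    if u [measurable]: "u \<in> borel_measurable lborel" for u
  proof (cases "(\<integral>\<^sup>+x. ennreal ((cmod (u x))\<^sup>2) \<partial>lborel) = \<infinity>")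
    case True
    then show ?thesis
      by (simp add: C_def ennreal_mult_top)
  next
    case False
    then have u_sq: "integrable lborel (\<lambda>x. (cmod (u x))\<^sup>2)"
      by (intro integrableI_nonneg) (auto simp: top.not_eq_extremum)
    then have "u \<in> L2"
      by (simp add: L2_def)
    then have "(\<Sum>k. ennreal ((cmod (fpair (\<lambda>x. u x * \<eta> k x) \<phi>))\<^sup>2))
        \<le> ennreal (B\<^sup>2) * ennreal (\<integral>x. (cmod (u x))\<^sup>2 \<partial>lborel)"
      using suminf_fpair_mult_le[OF \<phi> \<eta>] by (simp add: B_def ennreal_mult)
    also have "\<dots> = ennreal (B\<^sup>2) * (\<integral>\<^sup>+x. ennreal ((cmod (u x))\<^sup>2) \<partial>lborel)"
      using u_sq by (simp add: nn_integral_eq_integral)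
    also have "\<dots> \<le> C * (\<integral>\<^sup>+x. ennreal ((cmod (u x))\<^sup>2) \<partial>lborel)"
      by (intro mult_right_mono) (simp_all add: C_def)
    finally show ?thesis .
  qed
  moreover have "C < \<infinity>"
    by (simp add: C_def)
  ultimately show ?thesis
    using that by blast
qed

theorem corollary11p2:
  fixes M :: "'w measure" and F :: "real \<Rightarrow> 'w measure" and \<tau> :: "'w \<Rightarrow> real"
    and \<eta> :: "nat \<Rightarrow> 'a::euclidean_space \<Rightarrow> complex"
    and h :: "'w \<Rightarrow> real \<Rightarrow> 'a \<Rightarrow> complex"
  assumes "prob_space M" and "complete_measure M"
    and "usual_filtration M F"
    and "stopping_time F \<tau>" and "\<And>\<omega>. \<tau> \<omega> \<ge> 0"
    and "L2_onb \<eta>" and "\<And>k. schwartz (\<eta> k)"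
    and "(\<lambda>((\<omega>, t), x). h \<omega> t x) \<in> borel_measurable
           (restrict_space (predictable M F \<Otimes>\<^sub>M borel) (stoch_interval \<tau> \<times> UNIV))"
    and "AE \<omega> in M. (\<integral>\<^sup>+ t. indicator {0<..\<tau> \<omega>} t *
                       (\<integral>\<^sup>+ x. ennreal ((cmod (h \<omega> t x))\<^sup>2) \<partial>lborel) \<partial>lborel) < \<infinity>"
  shows "\<forall>\<phi> \<in> inv_fourier_D. \<forall>T > 0. AE \<omega> in M.
           (\<integral>\<^sup>+ t. indicator {0..T} t * indicator (stoch_interval \<tau>) (\<omega>, t) *
               (\<Sum>k. ennreal ((cmod (fpair (\<lambda>x. h \<omega> t x * \<eta> k x) \<phi>))\<^sup>2)) \<partial>lborel) < \<infinity>"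
proof (intro ballI allI impI)
  fix \<phi> :: "'a \<Rightarrow> complex" and T :: real
  assume \<phi>: "\<phi> \<in> inv_fourier_D"
  obtain C where C: "C < \<infinity>" and bound: "\<And>u. u \<in> borel_measurable lborel \<Longrightarrow>
      (\<Sum>k. ennreal ((cmod (fpair (\<lambda>x. u x * \<eta> k x) \<phi>))\<^sup>2))
        \<le> C * (\<integral>\<^sup>+x. ennreal ((cmod (u x))\<^sup>2) \<partial>lborel)"
    using suminf_fpair_mult_le_nn_integral[OF \<phi> L2_onb_imp_orthonormal[OF assms(6)]] by blast
  have integrand_le: "indicator {0..T} t * indicator (stoch_interval \<tau>) (\<omega>, t) *
        (\<Sum>k. ennreal ((cmod (fpair (\<lambda>x. h \<omega> t x * \<eta> k x) \<phi>))\<^sup>2))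
      \<le> C * (indicator {0<..\<tau> \<omega>} t * (\<integral>\<^sup>+ x. ennreal ((cmod (h \<omega> t x))\<^sup>2) \<partial>lborel))"
    if "\<omega> \<in> space M" for \<omega> t
  proof (cases "(\<omega>, t) \<in> stoch_interval \<tau>")
    case True
    with bound[OF borel_measurable_section_stoch_interval[OF assms(8) that True]] show ?thesis
      by (simp add: stoch_interval_def indicator_def)
  qed simp
  show "AE \<omega> in M. (\<integral>\<^sup>+ t. indicator {0..T} t * indicator (stoch_interval \<tau>) (\<omega>, t) *
      (\<Sum>k. ennreal ((cmod (fpair (\<lambda>x. h \<omega> t x * \<eta> k x) \<phi>))\<^sup>2)) \<partial>lborel) < \<infinity>"
    using assms(9) AE_space
  proof eventually_elim
    case (elim \<omega>)
    have "(\<integral>\<^sup>+ t. indicator {0..T} t * indicator (stoch_interval \<tau>) (\<omega>, t) *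
        (\<Sum>k. ennreal ((cmod (fpair (\<lambda>x. h \<omega> t x * \<eta> k x) \<phi>))\<^sup>2)) \<partial>lborel)
      \<le> (\<integral>\<^sup>+ t. C * (indicator {0<..\<tau> \<omega>} t * (\<integral>\<^sup>+ x. ennreal ((cmod (h \<omega> t x))\<^sup>2) \<partial>lborel)) \<partial>lborel)"
      using integrand_le[OF elim(2)] by (rule nn_integral_mono)
    also have "\<dots> \<le> C * (\<integral>\<^sup>+ t. indicator {0<..\<tau> \<omega>} t *
        (\<integral>\<^sup>+ x. ennreal ((cmod (h \<omega> t x))\<^sup>2) \<partial>lborel) \<partial>lborel)"
      using C by (rule nn_integral_cmult_le)
    also have "\<dots> < \<infinity>"
      using elim(1) C by (simp add: ennreal_mult_less_top)
    finally show ?case .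
  qed
qed

end
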